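(* Let $\Omega\subset\mathbb R^3$ be a bounded domain containing the origin and $k\ge0$ an integer. The sequence $$0\to\mathbb P_{k-2}(\Omega) \xrightarrow{q\mapsto q\boldsymbol x\boldsymbol x^{\intercal}} \mathbb P_k(\Omega; \mathbb S) \xrightarrow{\boldsymbol\tau\mapsto\boldsymbol\tau\times\boldsymbol x} \mathbb P_{k+1}(\Omega; \mathbb T)\xrightarrow{\boldsymbol\tau\mapsto\boldsymbol\tau\boldsymbol x} \mathbb P_{k+2}(\Omega; \mathbb R^3)\xrightarrow{\boldsymbol \pi_{RT}}\boldsymbol{RT}\to0$$ is well defined (in particular $\boldsymbol\tau\times\boldsymbol x$ is trace-free for symmetric $\boldsymbol\tau$) and is an exact complex.
   Context: $\mathbb S,\mathbb T$: real symmetric, resp. trace-free, $3\times3$ matrices; $\mathbb P_m(\Omega;X)$: $X$-valued polynomials of total degree $\le m$ ($\{0\}$ if $m<0$). $\boldsymbol x=(x_1,x_2,x_3)^{\intercal}$ is the position vector. For a matrix $\boldsymbol\tau$, $\boldsymbol\tau\times\boldsymbol x$ is the matrix whose $i$-th row is (row $i$ of $\boldsymbol\tau$)$\times\boldsymbol x$. $\boldsymbol{RT}=\{a\boldsymbol x+\boldsymbol b:a\in\mathbb R,\boldsymbol b\in\mathbb R^3\}$ and $\boldsymbol\pi_{RT}\boldsymbol v:=\boldsymbol v(0,0,0)+\frac13(\operatorname{div}\boldsymbol v)(0,0,0)\boldsymbol x$. *)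

theory Defs
  imports "HOL-Analysis.Analysis" "HOL-Analysis.Cross3"
begin

text \<open>Real polynomials in three variables of total degree at most m (m an integer;
  for m < 0 only the zero polynomial), as functions on R^3.\<close>
definition poly_deg :: "int \<Rightarrow> (real^3 \<Rightarrow> real) \<Rightarrow> bool" where
  "poly_deg m p \<longleftrightarrow> (\<exists>c :: nat \<Rightarrow> nat \<Rightarrow> nat \<Rightarrow> real. \<forall>x.
     p x = (\<Sum>a\<le>nat m. \<Sum>b\<le>nat m. \<Sum>d\<le>nat m.
              if int (a + b + d) \<le> m
              then c a b d * (x$1)^a * (x$2)^b * (x$3)^d else 0))"

definition poly_on :: "(real^3) set \<Rightarrow> int \<Rightarrow> (real^3 \<Rightarrow> real) \<Rightarrow> bool" where
  "poly_on \<Omega> m f \<longleftrightarrow> (\<exists>p. poly_deg m p \<and> (\<forall>x\<in>\<Omega>. f x = p x))"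

definition P_scal :: "(real^3) set \<Rightarrow> int \<Rightarrow> (real^3 \<Rightarrow> real) set" where
  "P_scal \<Omega> m = {q. poly_on \<Omega> m q}"

definition P_vec :: "(real^3) set \<Rightarrow> int \<Rightarrow> (real^3 \<Rightarrow> real^3) set" where
  "P_vec \<Omega> m = {v. \<forall>i. poly_on \<Omega> m (\<lambda>x. v x $ i)}"

definition P_mat :: "(real^3) set \<Rightarrow> int \<Rightarrow> (real^3 \<Rightarrow> real^3^3) set" where
  "P_mat \<Omega> m = {\<tau>. \<forall>i j. poly_on \<Omega> m (\<lambda>x. \<tau> x $ i $ j)}"

definition P_sym :: "(real^3) set \<Rightarrow> int \<Rightarrow> (real^3 \<Rightarrow> real^3^3) set" where
  "P_sym \<Omega> m = {\<tau> \<in> P_mat \<Omega> m. \<forall>x\<in>\<Omega>. transpose (\<tau> x) = \<tau> x}"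

definition P_tf :: "(real^3) set \<Rightarrow> int \<Rightarrow> (real^3 \<Rightarrow> real^3^3) set" where
  "P_tf \<Omega> m = {\<tau> \<in> P_mat \<Omega> m. \<forall>x\<in>\<Omega>. trace (\<tau> x) = 0}"

definition map_xxT :: "(real^3 \<Rightarrow> real) \<Rightarrow> real^3 \<Rightarrow> real^3^3" where
  "map_xxT q = (\<lambda>x. q x *\<^sub>R (\<chi> i j. x$i * x$j))"

definition map_cross :: "(real^3 \<Rightarrow> real^3^3) \<Rightarrow> real^3 \<Rightarrow> real^3^3" where
  "map_cross \<tau> = (\<lambda>x. \<chi> i. cross3 (\<tau> x $ i) x)"

definition map_x :: "(real^3 \<Rightarrow> real^3^3) \<Rightarrow> real^3 \<Rightarrow> real^3" where
  "map_x \<tau> = (\<lambda>x. \<tau> x *v x)"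

definition div_at :: "(real^3 \<Rightarrow> real^3) \<Rightarrow> real^3 \<Rightarrow> real" where
  "div_at v p = (\<Sum>i\<in>UNIV. frechet_derivative v (at p) (axis i 1) $ i)"

definition pi_RT :: "(real^3 \<Rightarrow> real^3) \<Rightarrow> real^3 \<Rightarrow> real^3" where
  "pi_RT v = (\<lambda>x. v 0 + ((1/3) * div_at v 0) *\<^sub>R x)"

definition RT :: "(real^3 \<Rightarrow> real^3) set" where
  "RT = {f. \<exists>(a::real) b. f = (\<lambda>x. a *\<^sub>R x + b)}"

end

theory Submission
  imports Defs "HOL-Computational_Algebra.Polynomial"
begin

text \<open>A polynomial that vanishes on a nonempty open set vanishes identically, so every hypothesis
  on \<open>\<Omega>\<close> becomes a global polynomial identity.

  The algebraic core is the Koszul complex of the position vector \<open>x\<close>: a polynomial field \<open>u\<close>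
  with \<open>u \<bullet> x = 0\<close> is \<open>w \<times> x\<close>, and one with \<open>u \<times> x = 0\<close> is \<open>a x\<close>, the degree dropping by
  one. Both follow by repeated division by coordinates, a polynomial vanishing on \<open>x\<^sub>i = 0\<close>
  being divisible by \<open>x\<^sub>i\<close>. Applied row by row this gives exactness at the symmetric matrices
  (rows \<open>a\<^sub>i x\<close>, and symmetry makes \<open>(a\<^sub>i)\<close> parallel to \<open>x\<close>) and at the trace-free matrices
  (rows \<open>w\<^sub>i \<times> x\<close>; the trace equals \<open>-2 vskw W \<bullet> x\<close>, so its vanishing yields \<open>g\<close> with
  \<open>W - g x\<^sup>T\<close> symmetric). Finally \<open>\<pi>\<^sub>R\<^sub>T v = 0\<close> means \<open>v(0) = 0\<close> and \<open>div v(0) = 0\<close>, so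
  \<open>v = A x\<close> with \<open>tr A(0) = 0\<close>; then \<open>tr A = b \<bullet> x\<close>, and subtracting a suitable \<open>M \<times> x\<close> with
  \<open>-2 vskw M = b\<close> makes \<open>A\<close> trace-free without changing \<open>A x\<close>.\<close>

section \<open>Polynomials of bounded degree\<close>

text \<open>Exponents are indexed by the coordinates themselves, so that lemmas about an arbitrary
  coordinate \<open>i\<close> need no case split on \<open>i\<close>.\<close>

definition monomial :: "(3 \<Rightarrow> nat) \<Rightarrow> real^3 \<Rightarrow> real" where
  "monomial e x = (\<Prod>j\<in>UNIV. x$j ^ e j)"

lemma monomial_3: "monomial e x = x$1 ^ e 1 * x$2 ^ e 2 * x$3 ^ e 3"
  unfolding monomial_def UNIV_3 by (simp add: ac_simps)

lemma monomial_mult: "monomial e x * monomial e' x = monomial (\<lambda>j. e j + e' j) x"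
  by (simp add: monomial_def power_add prod.distrib)

lemma monomial_factor_coord:
  assumes "0 < e i"
  shows "monomial e x = x$i * monomial (e(i := e i - 1)) x"
proof -
  have "monomial e x = x$i ^ e i * (\<Prod>j\<in>UNIV - {i}. x$j ^ e j)"
    unfolding monomial_def by (simp add: prod.remove)
  also have "\<dots> = x$i * (x$i ^ (e i - 1) * (\<Prod>j\<in>UNIV - {i}. x$j ^ e j))"
    using assms by (simp add: power_eq_if)
  also have "\<dots> = x$i * monomial (e(i := e i - 1)) x"
    unfolding monomial_def by (simp add: prod.remove[of UNIV i])
  finally show ?thesis .
qed

lemma sum_lower_exponent:
  fixes e :: "3 \<Rightarrow> nat"
  assumes "0 < e i"
  shows "sum (e(i := e i - 1)) UNIV + 1 = sum e UNIV"
  using assms by (simp add: sum.remove[of UNIV i])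

lemma poly_deg_zero: "poly_deg m (\<lambda>x. 0)"
  unfolding poly_deg_def by (rule exI[of _ "\<lambda>_ _ _. 0"]) (simp cong: if_cong)

lemma poly_deg_add:
  assumes "poly_deg m p" "poly_deg m q"
  shows "poly_deg m (\<lambda>x. p x + q x)"
proof -
  obtain c where c: "\<And>x. p x = (\<Sum>a\<le>nat m. \<Sum>b\<le>nat m. \<Sum>d\<le>nat m.
      if int (a + b + d) \<le> m then c a b d * (x$1)^a * (x$2)^b * (x$3)^d else 0)"
    using assms(1) unfolding poly_deg_def by blast
  obtain c' where c': "\<And>x. q x = (\<Sum>a\<le>nat m. \<Sum>b\<le>nat m. \<Sum>d\<le>nat m.
      if int (a + b + d) \<le> m then c' a b d * (x$1)^a * (x$2)^b * (x$3)^d else 0)"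
    using assms(2) unfolding poly_deg_def by blast
  show ?thesis
    unfolding poly_deg_def
  proof (rule exI[of _ "\<lambda>a b d. c a b d + c' a b d"], intro allI)
    fix x :: "real^3"
    show "p x + q x = (\<Sum>a\<le>nat m. \<Sum>b\<le>nat m. \<Sum>d\<le>nat m.
        if int (a + b + d) \<le> m then (c a b d + c' a b d) * (x$1)^a * (x$2)^b * (x$3)^d else 0)"
      unfolding c c' sum.distrib[symmetric] by (intro sum.cong refl) (simp add: algebra_simps)
  qed
qed

lemma sum_delta_3:
  fixes f :: "nat \<Rightarrow> nat \<Rightarrow> nat \<Rightarrow> real"
  assumes "a \<le> N" "b \<le> N" "d \<le> N"
  shows "(\<Sum>a'\<le>N. \<Sum>b'\<le>N. \<Sum>d'\<le>N. if a' = a \<and> b' = b \<and> d' = d then f a' b' d' else 0) = f a b d"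
proof -
  have nest: "(if a' = a \<and> b' = b \<and> d' = d then F else 0) =
      (if a' = a then if b' = b then if d' = d then F else 0 else 0 else (0::real))" for a' b' d' F
    by simp
  have pull: "(\<Sum>x\<in>A. if P then g x else (0::real)) = (if P then \<Sum>x\<in>A. g x else 0)" for A P g
    by simp
  show ?thesis
    using assms by (simp only: nest pull sum.delta finite_atMost atMost_iff if_True)
qed

lemma poly_deg_monomial:
  fixes e :: "3 \<Rightarrow> nat"
  assumes "int (sum e UNIV) \<le> m"
  shows "poly_deg m (\<lambda>x. r * monomial e x)"
proof -
  have le: "e 1 \<le> nat m" "e 2 \<le> nat m" "e 3 \<le> nat m"
    using assms by (auto simp: sum_3)
  show ?thesis
    unfolding poly_deg_def
  proof (rule exI[of _ "\<lambda>a b d. if a = e 1 \<and> b = e 2 \<and> d = e 3 then r else 0"], intro allI)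
    fix x :: "real^3"
    have "(\<Sum>a\<le>nat m. \<Sum>b\<le>nat m. \<Sum>d\<le>nat m.
        if int (a + b + d) \<le> m
        then (if a = e 1 \<and> b = e 2 \<and> d = e 3 then r else 0) * (x$1)^a * (x$2)^b * (x$3)^d else 0)
      = (\<Sum>a\<le>nat m. \<Sum>b\<le>nat m. \<Sum>d\<le>nat m.
        if a = e 1 \<and> b = e 2 \<and> d = e 3 then r * (x$1)^a * (x$2)^b * (x$3)^d else 0)"
      using assms by (intro sum.cong refl) (auto simp: sum_3)
    also have "\<dots> = r * monomial e x"
      using le by (simp only: sum_delta_3) (simp add: monomial_3 mult.assoc)
    finally show "r * monomial e x = (\<Sum>a\<le>nat m. \<Sum>b\<le>nat m. \<Sum>d\<le>nat m.
        if int (a + b + d) \<le> m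
        then (if a = e 1 \<and> b = e 2 \<and> d = e 3 then r else 0) * (x$1)^a * (x$2)^b * (x$3)^d else 0)"
      by (rule sym)
  qed
qed

lemma poly_deg_monomial_lower_exponent:
  assumes "int (sum e UNIV) \<le> m" "0 < e i"
  shows "poly_deg (m - 1) (\<lambda>x. r * monomial (e(i := e i - 1)) x)"
proof -
  have "int (sum (e(i := e i - 1)) UNIV) + 1 = int (sum e UNIV)"
    using arg_cong[OF sum_lower_exponent[of e i], of int] assms(2) by simp
  then show ?thesis
    using assms(1) by (intro poly_deg_monomial) linarith
qed

lemma poly_deg_induct [consumes 1, case_names zero add monomial]:
  assumes "poly_deg m p"
    and zero: "Q (\<lambda>x. 0)"
    and add: "\<And>f g. Q f \<Longrightarrow> Q g \<Longrightarrow> Q (\<lambda>x. f x + g x)"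
    and monomial: "\<And>e r. int (sum e UNIV) \<le> m \<Longrightarrow> Q (\<lambda>x. r * monomial e x)"
  shows "Q p"
proof -
  obtain c where c: "\<And>x. p x = (\<Sum>a\<le>nat m. \<Sum>b\<le>nat m. \<Sum>d\<le>nat m.
      if int (a + b + d) \<le> m then c a b d * (x$1)^a * (x$2)^b * (x$3)^d else 0)"
    using assms(1) unfolding poly_deg_def by blast
  have sums: "Q (\<lambda>x. \<Sum>a\<in>A. f a x)" if "finite A" "\<And>a. a \<in> A \<Longrightarrow> Q (f a)" for A f
    using that by (induction A rule: finite_induct) (auto intro: zero add)
  have summand: "Q (\<lambda>x. if int (a + b + d) \<le> m then c a b d * (x$1)^a * (x$2)^b * (x$3)^d else 0)"
    for a b d
  proof (cases "int (a + b + d) \<le> m")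
    case True
    define e :: "3 \<Rightarrow> nat" where "e j = (if j = 1 then a else if j = 2 then b else d)" for j
    have "sum e UNIV = a + b + d" "\<And>x. monomial e x = (x$1)^a * (x$2)^b * (x$3)^d"
      by (simp_all add: e_def sum_3 monomial_3)
    then show ?thesis
      using monomial[of e "c a b d"] True by (simp add: mult.assoc)
  qed (simp add: zero)
  have "Q (\<lambda>x. \<Sum>a\<le>nat m. \<Sum>b\<le>nat m. \<Sum>d\<le>nat m.
      if int (a + b + d) \<le> m then c a b d * (x$1)^a * (x$2)^b * (x$3)^d else 0)"
    by (intro sums finite_atMost summand)
  then show ?thesis
    by (simp add: c[abs_def])
qed

lemma poly_deg_sum:
  assumes "finite A" "\<And>a. a \<in> A \<Longrightarrow> poly_deg m (f a)"
  shows "poly_deg m (\<lambda>x. \<Sum>a\<in>A. f a x)"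
  using assms by (induction A rule: finite_induct) (auto intro: poly_deg_zero poly_deg_add)

lemma poly_deg_scale:
  assumes "poly_deg m p"
  shows "poly_deg m (\<lambda>x. r * p x)"
  using assms
proof (induction rule: poly_deg_induct)
  case (add f g)
  then show ?case
    using poly_deg_add by (simp add: distrib_left)
next
  case (monomial e s)
  then show ?case
    using poly_deg_monomial[of e m "r * s"] by (simp add: mult.assoc)
qed (simp add: poly_deg_zero)

lemma poly_deg_neg: "poly_deg m p \<Longrightarrow> poly_deg m (\<lambda>x. - p x)"
  using poly_deg_scale[of m p "-1"] by simp

lemma poly_deg_diff: "poly_deg m p \<Longrightarrow> poly_deg m q \<Longrightarrow> poly_deg m (\<lambda>x. p x - q x)"
  using poly_deg_add[of m p "\<lambda>x. - q x"] poly_deg_neg[of m q] by simp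

lemma poly_deg_mult:
  assumes "poly_deg m p" "poly_deg n q"
  shows "poly_deg (m + n) (\<lambda>x. p x * q x)"
  using assms(1)
proof (induction rule: poly_deg_induct)
  case (add f g)
  then show ?case
    using poly_deg_add by (simp add: distrib_right)
next
  case (monomial e r)
  from assms(2) show ?case
  proof (induction rule: poly_deg_induct)
    case (add f g)
    then show ?case
      using poly_deg_add by (simp add: distrib_left)
  next
    case (monomial e' s)
    have "int (sum (\<lambda>j. e j + e' j) UNIV) \<le> m + n"
      using \<open>int (sum e UNIV) \<le> m\<close> monomial by (simp add: sum.distrib)
    then show ?case
      using poly_deg_monomial[of "\<lambda>j. e j + e' j" "m + n" "r * s"]
      by (simp add: monomial_mult[symmetric] ac_simps)
  qed (simp add: poly_deg_zero)
qed (simp add: poly_deg_zero)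

lemma poly_deg_const: "0 \<le> m \<Longrightarrow> poly_deg m (\<lambda>x. r)"
  using poly_deg_monomial[of "\<lambda>_. 0" m r] by (simp add: monomial_def)

lemma poly_deg_coord: "1 \<le> m \<Longrightarrow> poly_deg m (\<lambda>x. x$i)"
  using poly_deg_monomial[of "(\<lambda>_. 0)(i := 1)" m 1]
  by (simp add: monomial_def sum.remove[of UNIV i] prod.remove[of UNIV i])

lemma poly_deg_coord_mult: "poly_deg m p \<Longrightarrow> poly_deg (m + 1) (\<lambda>x. p x * x$i)"
  using poly_deg_mult[of m p 1 "\<lambda>x. x$i"] poly_deg_coord[of 1 i] by simp

lemma poly_deg_coord_mult_left: "poly_deg m p \<Longrightarrow> poly_deg (m + 1) (\<lambda>x. x$i * p x)"
  using poly_deg_coord_mult[of m p i] by (simp add: mult.commute)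

lemma poly_deg_continuous:
  assumes "poly_deg m p"
  shows "continuous_on UNIV p"
  using assms
  by (induction rule: poly_deg_induct)
     (auto simp: monomial_def intro!: continuous_intros)

lemma poly_deg_differentiable:
  assumes "poly_deg m p"
  shows "p differentiable (at x)"
  using assms
proof (induction rule: poly_deg_induct)
  case (monomial e r)
  have coord: "(\<lambda>y::real^3. y$j) differentiable (at x)" for j
    by (rule bounded_linear_imp_differentiable) (rule bounded_linear_vec_nth)
  have "(\<lambda>y. \<Prod>j\<in>A. y$j ^ e j) differentiable (at x)" if "finite A" for A
    using that by (induction A rule: finite_induct) (auto intro!: derivative_intros coord)
  then show ?case
    unfolding monomial_def by (auto intro!: derivative_intros)
qed auto

lemma poly_deg_restrict_to_line:
  assumes "poly_deg m p"
  obtains P :: "real poly" where "\<And>t. poly P t = p (x0 + t *\<^sub>R h)"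
proof -
  have "\<exists>P :: real poly. \<forall>t. poly P t = p (x0 + t *\<^sub>R h)"
    using assms
  proof (induction rule: poly_deg_induct)
    case (add f g)
    then obtain P Q :: "real poly" where "\<forall>t. poly P t = f (x0 + t *\<^sub>R h)"
      "\<forall>t. poly Q t = g (x0 + t *\<^sub>R h)"
      by blast
    then show ?case
      by (intro exI[of _ "P + Q"]) simp
  next
    case (monomial e r)
    show ?case
      by (intro exI[of _ "smult r (\<Prod>j\<in>UNIV. [:x0$j, h$j:] ^ e j)"])
         (simp add: monomial_def poly_prod poly_power algebra_simps)
  qed (intro exI[of _ 0], simp)
  then show ?thesis
    using that by blast
qed

lemma poly_deg_zero_on_open:
  assumes "poly_deg m p" "open U" "x0 \<in> U" "\<And>x. x \<in> U \<Longrightarrow> p x = 0"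
  shows "p y = 0"
proof -
  define h where "h = y - x0"
  obtain P where P: "\<And>t. poly P t = p (x0 + t *\<^sub>R h)"
    using poly_deg_restrict_to_line[OF assms(1)] by blast
  obtain e where e: "e > 0" "ball x0 e \<subseteq> U"
    using assms(2,3) open_contains_ball by blast
  define \<delta> where "\<delta> = e / (norm h + 1)"
  have "\<delta> > 0"
    using e(1) by (simp add: \<delta>_def add_nonneg_pos)
  have "{-\<delta><..<\<delta>} \<subseteq> {t. poly P t = 0}"
  proof
    fix t assume t: "t \<in> {-\<delta><..<\<delta>}"
    have "\<bar>t\<bar> < \<delta>"
      using t by auto
    then have "\<bar>t\<bar> * (norm h + 1) < e"
      unfolding \<delta>_def by (simp add: pos_less_divide_eq add_nonneg_pos)
    moreover have "\<bar>t\<bar> * norm h \<le> \<bar>t\<bar> * (norm h + 1)"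
      by (simp add: mult_left_mono)
    ultimately have "norm (t *\<^sub>R h) < e"
      by simp
    then have "x0 + t *\<^sub>R h \<in> U"
      using e(2) by (auto simp: dist_norm)
    then show "t \<in> {t. poly P t = 0}"
      using P assms(4) by simp
  qed
  moreover have "infinite {-\<delta><..<\<delta>}"
    using \<open>\<delta> > 0\<close> by simp
  ultimately have "P = 0"
    using finite_subset poly_roots_finite by blast
  then show ?thesis
    using P[of 1] by (simp add: h_def)
qed

section \<open>Dividing by a coordinate\<close>

definition zero_coord :: "3 \<Rightarrow> real^3 \<Rightarrow> real^3" where
  "zero_coord i x = (\<chi> j. if j = i then 0 else x$j)"

lemma zero_coord_nth [simp]: "zero_coord i x $ j = (if j = i then 0 else x$j)"
  by (simp add: zero_coord_def)

lemma monomial_zero_coord: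
  "monomial e (zero_coord i x) = (if e i = 0 then monomial e x else 0)"
  unfolding monomial_def
  by (auto intro!: prod.cong simp: prod_zero_iff)

lemma poly_deg_zero_coord:
  assumes "poly_deg m p"
  shows "poly_deg m (\<lambda>x. p (zero_coord i x))"
  using assms
proof (induction rule: poly_deg_induct)
  case (monomial e r)
  then show ?case
    by (cases "e i = 0") (simp_all add: monomial_zero_coord poly_deg_monomial poly_deg_zero)
qed (auto intro: poly_deg_zero poly_deg_add)

lemma poly_deg_split_coord:
  assumes "poly_deg m p"
  obtains q where "poly_deg (m - 1) q" "\<And>x. p x = p (zero_coord i x) + x$i * q x"
proof -
  have "\<exists>q. poly_deg (m - 1) q \<and> (\<forall>x. p x = p (zero_coord i x) + x$i * q x)"
    using assms
  proof (induction rule: poly_deg_induct)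
    case zero
    then show ?case by (auto intro: poly_deg_zero)
  next
    case (add f g)
    then obtain qf qg where qf: "poly_deg (m - 1) qf" "\<And>x. f x = f (zero_coord i x) + x$i * qf x"
      and qg: "poly_deg (m - 1) qg" "\<And>x. g x = g (zero_coord i x) + x$i * qg x"
      by blast
    have "f x + g x = f (zero_coord i x) + g (zero_coord i x) + x$i * (qf x + qg x)" for x
      using qf(2)[of x] qg(2)[of x] by (simp add: distrib_left)
    then show ?case
      using poly_deg_add[OF qf(1) qg(1)] by blast
  next
    case (monomial e r)
    show ?case
    proof (cases "e i = 0")
      case True
      then show ?thesis
        by (intro exI[of _ "\<lambda>x. 0"]) (simp add: poly_deg_zero monomial_zero_coord)
    next
      case False
      define e' where "e' = e(i := e i - 1)"
      have "poly_deg (m - 1) (\<lambda>x. r * monomial e' x)"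
        using monomial False unfolding e'_def by (intro poly_deg_monomial_lower_exponent) simp_all
      moreover have "r * monomial e x = r * monomial e (zero_coord i x) + x$i * (r * monomial e' x)" for x
        using False monomial_factor_coord[of e i x] unfolding e'_def monomial_zero_coord by simp
      ultimately show ?thesis
        by blast
    qed
  qed
  then show ?thesis
    using that by blast
qed

lemma continuous_zero_by_coord_line:
  fixes f :: "real^'n \<Rightarrow> real"
  assumes "continuous_on UNIV f"
    and "\<And>y. y$j \<noteq> 0 \<Longrightarrow> (\<And>l. l \<noteq> j \<Longrightarrow> y$l = x$l) \<Longrightarrow> f y = 0"
  shows "f x = 0"
proof (cases "x$j = 0")
  case False
  then show ?thesis
    using assms(2)[of x] by auto
next
  case True
  have "((\<lambda>t. f (x + t *\<^sub>R axis j 1)) \<longlongrightarrow> f (x + 0 *\<^sub>R axis j 1)) (at_right 0)"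
    using assms(1) by (intro continuous_on_tendsto_compose[of UNIV f] tendsto_intros) auto
  moreover have "\<forall>\<^sub>F t in at_right (0::real). f (x + t *\<^sub>R axis j 1) = 0"
    using eventually_at_right_less
  proof (rule eventually_mono)
    fix t :: real
    assume "0 < t"
    then show "f (x + t *\<^sub>R axis j 1) = 0"
      using True by (intro assms(2)) (auto simp: axis_def)
  qed
  ultimately have "((\<lambda>t. 0) \<longlongrightarrow> f x) (at_right (0::real))"
    by (simp add: tendsto_cong[symmetric])
  then show ?thesis
    by (simp add: tendsto_const_iff)
qed

lemma poly_deg_cancel_coord:
  assumes "poly_deg m f" "poly_deg m g" "\<And>x. x$i * f x = x$i * g x"
  shows "f x = g x"
proof -
  have "f x - g x = 0"
  proof (rule continuous_zero_by_coord_line[where j = i])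
    show "continuous_on UNIV (\<lambda>x. f x - g x)"
      using poly_deg_continuous[OF poly_deg_diff[OF assms(1,2)]] .
    show "f y - g y = 0" if "y$i \<noteq> 0" for y
      using assms(3)[of y] that by simp
  qed
  then show ?thesis
    by simp
qed

lemma poly_deg_divisible_by_coord:
  assumes "poly_deg m p" "i \<noteq> j" "\<And>x. x$i = 0 \<Longrightarrow> x$j * p x = 0"
  obtains q where "poly_deg (m - 1) q" "\<And>x. p x = x$i * q x"
proof -
  obtain q where q: "poly_deg (m - 1) q" "\<And>x. p x = p (zero_coord i x) + x$i * q x"
    using poly_deg_split_coord[OF assms(1)] by blast
  have vanish: "p (zero_coord i x) = 0" for x
  proof (rule continuous_zero_by_coord_line[where j = j])
    show "continuous_on UNIV p"
      using assms(1) by (rule poly_deg_continuous)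
    fix y :: "real^3"
    assume "y$j \<noteq> 0" "\<And>l. l \<noteq> j \<Longrightarrow> y$l = zero_coord i x $ l"
    then show "p y = 0"
      using assms(2) assms(3)[of y] by simp
  qed
  have "p x = x$i * q x" for x
    using q(2)[of x] vanish[of x] by simp
  then show ?thesis
    using that q(1) by blast
qed

lemma poly_deg_vanishing_on_coord_axis:
  assumes "poly_deg m p" "i \<noteq> j" "i \<noteq> k" "j \<noteq> k"
    and "\<And>x. x$i = 0 \<Longrightarrow> x$j = 0 \<Longrightarrow> x$k * p x = 0"
  obtains a b where "poly_deg (m - 1) a" "poly_deg (m - 1) b" "\<And>x. p x = x$i * a x + x$j * b x"
proof -
  obtain a where a: "poly_deg (m - 1) a" "\<And>x. p x = p (zero_coord i x) + x$i * a x"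
    using poly_deg_split_coord[OF assms(1)] by blast
  have "x$j = 0 \<Longrightarrow> x$k * p (zero_coord i x) = 0" for x
    using assms(2,3) assms(5)[of "zero_coord i x"] by simp
  then obtain b where b: "poly_deg (m - 1) b" "\<And>x. p (zero_coord i x) = x$j * b x"
    using poly_deg_divisible_by_coord[OF poly_deg_zero_coord[OF assms(1)] assms(4)] by blast
  have "p x = x$i * a x + x$j * b x" for x
    using a(2)[of x] b(2)[of x] by simp
  then show ?thesis
    using that a(1) b(1) by blast
qed

section \<open>Polynomial vector fields and the Koszul complex of the position vector\<close>

definition poly_vec_deg :: "int \<Rightarrow> (real^3 \<Rightarrow> real^3) \<Rightarrow> bool" where
  "poly_vec_deg m u \<longleftrightarrow> (\<forall>j. poly_deg m (\<lambda>x. u x $ j))"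

lemma poly_vec_deg_vector:
  assumes "poly_deg m f" "poly_deg m g" "poly_deg m h"
  shows "poly_vec_deg m (\<lambda>x. vector [f x, g x, h x])"
  using assms unfolding poly_vec_deg_def by (simp add: forall_3)

lemma poly_vec_deg_scaleR_axis:
  assumes "poly_deg m c"
  shows "poly_vec_deg m (\<lambda>x. c x *\<^sub>R axis i 1)"
  using assms unfolding poly_vec_deg_def
  by (auto simp: axis_def poly_deg_zero cong: if_cong)

lemma poly_vec_deg_diff:
  "poly_vec_deg m u \<Longrightarrow> poly_vec_deg m w \<Longrightarrow> poly_vec_deg m (\<lambda>x. u x - w x)"
  by (simp add: poly_vec_deg_def poly_deg_diff)

lemma poly_vec_deg_zero_on_open:
  assumes "poly_vec_deg m u" "open U" "x0 \<in> U" "\<And>x. x \<in> U \<Longrightarrow> u x = 0"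
  shows "u y = 0"
  using assms poly_deg_zero_on_open[of m "\<lambda>x. u x $ j" U x0 y for j]
  by (simp add: poly_vec_deg_def vec_eq_iff)

lemma poly_deg_expand_at_0:
  assumes "poly_deg m p"
  obtains A where "poly_vec_deg (m - 1) A" "\<And>x. p x = p 0 + A x \<bullet> x"
proof -
  have "\<exists>A. poly_vec_deg (m - 1) A \<and> (\<forall>x. p x = p 0 + A x \<bullet> x)"
    using assms
  proof (induction rule: poly_deg_induct)
    case zero
    then show ?case
      by (intro exI[of _ "\<lambda>x. 0"]) (simp add: poly_vec_deg_def poly_deg_zero)
  next
    case (add f g)
    then obtain A B where A: "poly_vec_deg (m - 1) A" "\<And>x. f x = f 0 + A x \<bullet> x"
      and B: "poly_vec_deg (m - 1) B" "\<And>x. g x = g 0 + B x \<bullet> x"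
      by blast
    have "f x + g x = (f 0 + g 0) + (A x + B x) \<bullet> x" for x
      using A(2)[of x] B(2)[of x] by (simp add: inner_add_left)
    moreover have "poly_vec_deg (m - 1) (\<lambda>x. A x + B x)"
      using A(1) B(1) by (simp add: poly_vec_deg_def poly_deg_add)
    ultimately show ?case
      by blast
  next
    case (monomial e r)
    show ?case
    proof (cases "\<exists>i. 0 < e i")
      case False
      then have "monomial e x = 1" for x
        by (simp add: monomial_def)
      then show ?thesis
        by (intro exI[of _ "\<lambda>x. 0"]) (simp add: poly_vec_deg_def poly_deg_zero)
    next
      case True
      then obtain i where i: "0 < e i" by blast
      define e' where "e' = e(i := e i - 1)"
      have "poly_deg (m - 1) (\<lambda>x. r * monomial e' x)"
        using monomial i unfolding e'_def by (rule poly_deg_monomial_lower_exponent)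
      moreover have "r * monomial e x = r * monomial e 0 + ((r * monomial e' x) *\<^sub>R axis i 1) \<bullet> x"
        for x
        using monomial_factor_coord[of e i x] monomial_factor_coord[of e i 0] i
        unfolding e'_def by (simp add: inner_axis' mult.commute)
      ultimately show ?thesis
        by (blast intro: poly_vec_deg_scaleR_axis)
    qed
  qed
  then show ?thesis
    using that by blast
qed

lemma poly_deg_inner_position:
  assumes "poly_vec_deg m u"
  shows "poly_deg (m + 1) (\<lambda>x. u x \<bullet> x)"
proof -
  have "poly_deg (m + 1) (\<lambda>x. u x $ i * x $ i)" for i
    using poly_deg_coord_mult[of m "\<lambda>x. u x $ i" i] assms by (simp add: poly_vec_deg_def)
  then show ?thesis
    unfolding inner_vec_def by (intro poly_deg_sum) simp_all
qed

lemma poly_vec_deg_cross_position: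
  assumes "poly_vec_deg m u"
  shows "poly_vec_deg (m + 1) (\<lambda>x. cross3 (u x) x)"
  using assms unfolding poly_vec_deg_def
  by (auto simp: forall_3 cross_components intro!: poly_deg_diff poly_deg_coord_mult
      poly_deg_coord_mult_left)

lemma poly_deg_koszul_plane:
  assumes "poly_deg n f" "poly_deg n g" "i \<noteq> j" "\<And>x. f x * x$i + g x * x$j = 0"
  obtains h where "poly_deg (n - 1) h" "\<And>x. f x = - h x * x$j" "\<And>x. g x = h x * x$i"
proof -
  have "x$i = 0 \<Longrightarrow> x$j * g x = 0" for x
    using assms(4)[of x] by (simp add: mult.commute)
  then obtain h where h: "poly_deg (n - 1) h" "\<And>x. g x = x$i * h x"
    using poly_deg_divisible_by_coord[OF assms(2,3)] by blast
  have "poly_deg n (\<lambda>x. - h x * x$j)"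
    using poly_deg_coord_mult[OF poly_deg_neg[OF h(1)], of j] by simp
  moreover have "x$i * f x = x$i * (- h x * x$j)" for x
    using assms(4)[of x] h(2)[of x] by (simp add: algebra_simps)
  ultimately have "f x = - h x * x$j" for x
    using poly_deg_cancel_coord[OF assms(1)] by blast
  then show ?thesis
    using that h by (simp add: mult.commute)
qed

lemma poly_vec_deg_koszul:
  assumes "poly_vec_deg n u" "\<And>x. u x \<bullet> x = 0"
  obtains w where "poly_vec_deg (n - 1) w" "\<And>x. u x = cross3 (w x) x"
proof -
  have u: "poly_deg n (\<lambda>x. u x $ j)" for j
    using assms(1) by (simp add: poly_vec_deg_def)
  have dot: "u x $ 1 * x$1 + u x $ 2 * x$2 + u x $ 3 * x$3 = 0" for x
    using assms(2)[of x] by (simp add: inner_vec_def sum_3)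
  have "x$1 = 0 \<Longrightarrow> x$2 = 0 \<Longrightarrow> x$3 * u x $ 3 = 0" for x
    using dot[of x] by (simp add: mult.commute)
  then obtain a b where a: "poly_deg (n - 1) a" and b: "poly_deg (n - 1) b"
    and u3: "\<And>x. u x $ 3 = x$1 * a x + x$2 * b x"
    using poly_deg_vanishing_on_coord_axis[OF u[of 3], of 1 2 3] by auto
  have "poly_deg n (\<lambda>x. a x * x$3)" "poly_deg n (\<lambda>x. b x * x$3)"
    using poly_deg_coord_mult[OF a, of 3] poly_deg_coord_mult[OF b, of 3] by simp_all
  then have f: "poly_deg n (\<lambda>x. u x $ 1 + a x * x$3)" and g: "poly_deg n (\<lambda>x. u x $ 2 + b x * x$3)"
    using u by (auto intro: poly_deg_add)
  have "(u x $ 1 + a x * x$3) * x$1 + (u x $ 2 + b x * x$3) * x$2 = 0" for x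
    using dot[of x] u3[of x] by (simp add: algebra_simps)
  then obtain h where h: "poly_deg (n - 1) h"
    and u1: "\<And>x. u x $ 1 + a x * x$3 = - h x * x$2"
    and u2: "\<And>x. u x $ 2 + b x * x$3 = h x * x$1"
    using poly_deg_koszul_plane[OF f g, of 1 2] by auto
  have "poly_vec_deg (n - 1) (\<lambda>x. vector [b x, - a x, h x])"
    using b poly_deg_neg[OF a] h by (rule poly_vec_deg_vector)
  moreover have "u x = cross3 (vector [b x, - a x, h x]) x" for x
    using u1[of x] u2[of x] u3[of x]
    by (simp add: vec_eq_iff forall_3 cross_components algebra_simps)
  ultimately show ?thesis
    using that by blast
qed

lemma poly_vec_deg_parallel:
  assumes "poly_vec_deg n u" "\<And>x. cross3 (u x) x = 0"
  obtains a where "poly_deg (n - 1) a" "\<And>x. u x = a x *\<^sub>R x"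
proof -
  have u: "poly_deg n (\<lambda>x. u x $ j)" for j
    using assms(1) by (simp add: poly_vec_deg_def)
  have c2: "u x $ 3 * x$1 = u x $ 1 * x$3" and c3: "u x $ 1 * x$2 = u x $ 2 * x$1" for x
    using arg_cong[OF assms(2)[of x], of "\<lambda>v. v$2"] arg_cong[OF assms(2)[of x], of "\<lambda>v. v$3"]
    by (simp_all add: cross_components)
  have "x$1 = 0 \<Longrightarrow> x$2 * u x $ 1 = 0" for x
    using c3[of x] by (simp add: mult.commute)
  then obtain a where a: "poly_deg (n - 1) a" and u1: "\<And>x. u x $ 1 = x$1 * a x"
    using poly_deg_divisible_by_coord[OF u[of 1], of 1 2] by auto
  have "u x $ j = a x * x$j" if "j \<noteq> 1" for j x
  proof (rule poly_deg_cancel_coord[where i = 1])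
    show "poly_deg n (\<lambda>x. u x $ j)"
      by (rule u)
    show "poly_deg n (\<lambda>x. a x * x$j)"
      using poly_deg_coord_mult[OF a] by simp
    have "j = 2 \<or> j = 3"
      using that exhaust_3 by blast
    then show "x$1 * u x $ j = x$1 * (a x * x$j)" for x
      using c2[of x] c3[of x] u1[of x] by (auto simp: algebra_simps)
  qed
  then have "u x = a x *\<^sub>R x" for x
    using u1[of x] by (simp add: vec_eq_iff forall_3 mult.commute)
  then show ?thesis
    using that a by blast
qed

section \<open>Matrix fields\<close>

definition row_cross :: "real^3^3 \<Rightarrow> real^3 \<Rightarrow> real^3^3" where
  "row_cross M x = (\<chi> i. cross3 (M $ i) x)"

text \<open>Up to the factor \<open>-2\<close> this is the axial vector \<open>vskw M\<close> of the skew part of \<open>M\<close>;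
  the normalisation makes \<open>trace_row_cross\<close> hold without constants.\<close>

definition skew_vector :: "real^3^3 \<Rightarrow> real^3" where
  "skew_vector M = vector [M$2$3 - M$3$2, M$3$1 - M$1$3, M$1$2 - M$2$1]"

lemma matrix_vector_mult_nth_inner: "(M *v x) $ i = M $ i \<bullet> x"
  by (simp add: matrix_vector_mult_def inner_vec_def mult.commute)

lemma map_cross_eq_row_cross: "map_cross \<tau> x = row_cross (\<tau> x) x"
  by (simp add: map_cross_def row_cross_def)

lemma trace_row_cross: "trace (row_cross M x) = skew_vector M \<bullet> x"
  by (simp add: row_cross_def skew_vector_def trace_def sum_3 inner_vec_def cross_components
      algebra_simps)

lemma skew_vector_eq_0_iff: "skew_vector M = 0 \<longleftrightarrow> transpose M = M"
  by (simp add: skew_vector_def transpose_def vec_eq_iff forall_3) auto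

lemma row_cross_mult_position: "row_cross M x *v x = 0"
  using dot_cross_self(3)
  by (simp add: row_cross_def matrix_vector_mult_def vec_eq_iff inner_vec_def)

lemma row_cross_outer_position: "row_cross (\<chi> i j. a$i * x$j) x = 0"
proof -
  have row: "(\<chi> j. a$i * x$j) = a$i *\<^sub>R x" for i
    by (simp add: vec_eq_iff)
  show ?thesis
    unfolding row_cross_def vec_lambda_beta row by (simp add: cross_mult_left vec_eq_iff)
qed

lemma skew_vector_outer: "skew_vector (\<chi> i j. a$i * x$j) = cross3 a x"
  by (simp add: skew_vector_def vec_eq_iff forall_3 cross_components algebra_simps)

lemma skew_vector_diff: "skew_vector (M - N) = skew_vector M - skew_vector N"
  by (simp add: skew_vector_def vec_eq_iff forall_3)

lemma row_cross_diff: "row_cross (M - N) x = row_cross M x - row_cross N x"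
  by (simp add: row_cross_def vec_eq_iff cross3_def vector_def algebra_simps)

definition poly_mat_deg :: "int \<Rightarrow> (real^3 \<Rightarrow> real^3^3) \<Rightarrow> bool" where
  "poly_mat_deg m M \<longleftrightarrow> (\<forall>i. poly_vec_deg m (\<lambda>x. M x $ i))"

lemma poly_mat_deg_entry: "poly_mat_deg m M \<Longrightarrow> poly_deg m (\<lambda>x. M x $ i $ j)"
  by (simp add: poly_mat_deg_def poly_vec_deg_def)

lemma poly_mat_deg_diff:
  "poly_mat_deg m M \<Longrightarrow> poly_mat_deg m N \<Longrightarrow> poly_mat_deg m (\<lambda>x. M x - N x)"
  by (simp add: poly_mat_deg_def poly_vec_deg_diff)

lemma poly_mat_deg_row_cross:
  "poly_mat_deg m M \<Longrightarrow> poly_mat_deg (m + 1) (\<lambda>x. row_cross (M x) x)"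
  by (simp add: poly_mat_deg_def row_cross_def poly_vec_deg_cross_position)

lemma poly_vec_deg_mult_position:
  assumes "poly_mat_deg m M"
  shows "poly_vec_deg (m + 1) (\<lambda>x. M x *v x)"
  using assms poly_deg_inner_position
  by (simp add: poly_mat_deg_def poly_vec_deg_def[of "m + 1"] matrix_vector_mult_nth_inner)

lemma poly_deg_trace:
  "poly_mat_deg m M \<Longrightarrow> poly_deg m (\<lambda>x. trace (M x))"
  unfolding trace_def by (intro poly_deg_sum poly_mat_deg_entry) simp_all

lemma poly_vec_deg_skew_vector:
  "poly_mat_deg m M \<Longrightarrow> poly_vec_deg m (\<lambda>x. skew_vector (M x))"
  unfolding skew_vector_def by (intro poly_vec_deg_vector poly_deg_diff poly_mat_deg_entry)

lemma poly_mat_deg_outer_position: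
  assumes "poly_vec_deg m a"
  shows "poly_mat_deg (m + 1) (\<lambda>x. \<chi> i j. a x $ i * x $ j)"
  using assms by (simp add: poly_mat_deg_def poly_vec_deg_def poly_deg_coord_mult)

section \<open>The spaces on the domain\<close>

lemma P_scal_iff: "q \<in> P_scal \<Omega> m \<longleftrightarrow> (\<exists>p. poly_deg m p \<and> (\<forall>x\<in>\<Omega>. q x = p x))"
  by (simp add: P_scal_def poly_on_def)

lemma P_vec_iff: "v \<in> P_vec \<Omega> m \<longleftrightarrow> (\<exists>V. poly_vec_deg m V \<and> (\<forall>x\<in>\<Omega>. v x = V x))"
proof
  assume "v \<in> P_vec \<Omega> m"
  then have "\<forall>j. \<exists>p. poly_deg m p \<and> (\<forall>x\<in>\<Omega>. v x $ j = p x)"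
    by (simp add: P_vec_def poly_on_def)
  then obtain p where p: "\<And>j. poly_deg m (p j)" "\<And>j x. x \<in> \<Omega> \<Longrightarrow> v x $ j = p j x"
    by metis
  then show "\<exists>V. poly_vec_deg m V \<and> (\<forall>x\<in>\<Omega>. v x = V x)"
    by (intro exI[of _ "\<lambda>x. \<chi> j. p j x"]) (simp add: poly_vec_deg_def vec_eq_iff)
qed (auto simp: P_vec_def poly_on_def poly_vec_deg_def)

lemma P_mat_iff: "\<tau> \<in> P_mat \<Omega> m \<longleftrightarrow> (\<exists>T. poly_mat_deg m T \<and> (\<forall>x\<in>\<Omega>. \<tau> x = T x))"
proof
  assume "\<tau> \<in> P_mat \<Omega> m"
  then have "\<forall>i j. \<exists>p. poly_deg m p \<and> (\<forall>x\<in>\<Omega>. \<tau> x $ i $ j = p x)"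
    by (simp add: P_mat_def poly_on_def)
  then obtain p where p: "\<And>i j. poly_deg m (p i j)" "\<And>i j x. x \<in> \<Omega> \<Longrightarrow> \<tau> x $ i $ j = p i j x"
    by metis
  then show "\<exists>T. poly_mat_deg m T \<and> (\<forall>x\<in>\<Omega>. \<tau> x = T x)"
    by (intro exI[of _ "\<lambda>x. \<chi> i j. p i j x"])
       (simp add: poly_mat_deg_def poly_vec_deg_def vec_eq_iff)
next
  assume "\<exists>T. poly_mat_deg m T \<and> (\<forall>x\<in>\<Omega>. \<tau> x = T x)"
  then obtain T where "poly_mat_deg m T" "\<forall>x\<in>\<Omega>. \<tau> x = T x"
    by blast
  then show "\<tau> \<in> P_mat \<Omega> m"
    unfolding P_mat_def poly_on_def using poly_mat_deg_entry by fastforce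
qed

lemma div_at_matrix_mult_position:
  assumes "open \<Omega>" "0 \<in> \<Omega>"
    and v: "\<And>x. x \<in> \<Omega> \<Longrightarrow> v x = c + W x *v x"
    and W: "\<And>i j. (\<lambda>x. W x $ i $ j) differentiable (at 0)"
  shows "div_at v 0 = trace (W 0)"
proof -
  obtain D where D: "\<And>i j. ((\<lambda>x. W x $ i $ j) has_derivative D i j) (at 0)"
    using W unfolding differentiable_def by metis
  have coord: "((\<lambda>x::real^3. x$j) has_derivative (\<lambda>h. h$j)) (at 0)" for j
    by (rule bounded_linear_imp_has_derivative) (rule bounded_linear_vec_nth)
  have entry: "((\<lambda>x. W x $ i $ j * x$j) has_derivative (\<lambda>h. W 0 $ i $ j * h$j)) (at 0)" for i j
    using has_derivative_mult[OF D coord] by (rule has_derivative_eq_rhs) simp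
  define g where "g x = (\<Sum>i\<in>UNIV. ((\<Sum>j\<in>UNIV. W x $ i $ j * x$j) + c$i) *\<^sub>R axis i (1::real))"
    for x :: "real^3"
  define g' where "g' h = (\<Sum>i\<in>UNIV. (\<Sum>j\<in>UNIV. W 0 $ i $ j * h$j) *\<^sub>R axis i (1::real))"
    for h :: "real^3"
  have "(g has_derivative g') (at 0)"
    unfolding g_def g'_def
    by (intro has_derivative_sum has_derivative_scaleR_left has_derivative_add_const entry)
  moreover have "g x = v x" if "x \<in> \<Omega>" for x
    unfolding g_def v[OF that]
    by (simp add: vec_eq_iff axis_def matrix_vector_mult_def if_distrib add.commute cong: if_cong)
  ultimately have "(v has_derivative g') (at 0)"
    using has_derivative_transform_within_open[OF _ assms(1,2)] by blast
  then have "frechet_derivative v (at 0) = g'"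
    by (rule frechet_derivative_at[symmetric])
  then show ?thesis
    by (simp add: div_at_def g'_def trace_def axis_def if_distrib cong: if_cong)
qed

section \<open>The complex\<close>

lemma map_xxT_in_P_sym:
  assumes "q \<in> P_scal \<Omega> (m - 2)"
  shows "map_xxT q \<in> P_sym \<Omega> m"
proof -
  obtain p where p: "poly_deg (m - 2) p" "\<And>x. x \<in> \<Omega> \<Longrightarrow> q x = p x"
    using assms by (auto simp: P_scal_iff)
  have "poly_deg (m - 2 + 1 + 1) (\<lambda>x. x$i * (x$j * p x))" for i j
    by (intro poly_deg_coord_mult_left p(1))
  then have "poly_mat_deg m (map_xxT p)"
    by (simp add: poly_mat_deg_def poly_vec_deg_def map_xxT_def mult.commute mult.left_commute)
  then have "map_xxT q \<in> P_mat \<Omega> m"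
    unfolding P_mat_iff using p(2) by (intro exI[of _ "map_xxT p"]) (simp add: map_xxT_def)
  moreover have "transpose (map_xxT q x) = map_xxT q x" for x
    by (simp add: map_xxT_def transpose_def vec_eq_iff mult.commute)
  ultimately show ?thesis
    by (simp add: P_sym_def)
qed

lemma map_cross_in_P_tf:
  assumes "\<tau> \<in> P_sym \<Omega> m"
  shows "map_cross \<tau> \<in> P_tf \<Omega> (m + 1)"
proof -
  obtain T where T: "poly_mat_deg m T" "\<And>x. x \<in> \<Omega> \<Longrightarrow> \<tau> x = T x"
    using assms by (auto simp: P_sym_def P_mat_iff)
  have "map_cross \<tau> \<in> P_mat \<Omega> (m + 1)"
    unfolding P_mat_iff map_cross_eq_row_cross
    using poly_mat_deg_row_cross[OF T(1)] T(2) by auto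
  moreover have "trace (map_cross \<tau> x) = 0" if "x \<in> \<Omega>" for x
    using assms that
    by (simp add: map_cross_eq_row_cross trace_row_cross P_sym_def flip: skew_vector_eq_0_iff)
  ultimately show ?thesis
    by (simp add: P_tf_def)
qed

lemma map_x_in_P_vec:
  assumes "\<tau> \<in> P_mat \<Omega> m"
  shows "map_x \<tau> \<in> P_vec \<Omega> (m + 1)"
proof -
  obtain T where T: "poly_mat_deg m T" "\<And>x. x \<in> \<Omega> \<Longrightarrow> \<tau> x = T x"
    using assms by (auto simp: P_mat_iff)
  then show ?thesis
    unfolding P_vec_iff map_x_def using poly_vec_deg_mult_position by auto
qed

lemma pi_RT_in_RT: "pi_RT v \<in> RT"
  unfolding pi_RT_def RT_def by (auto simp: fun_eq_iff add.commute)

lemma map_cross_map_xxT: "map_cross (map_xxT q) x = 0"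
proof -
  have "map_xxT q x = (\<chi> i j. (q x * x$i) * x$j)"
    by (simp add: map_xxT_def vec_eq_iff mult.assoc)
  then show ?thesis
    using row_cross_outer_position[of "q x *\<^sub>R x" x] by (simp add: map_cross_eq_row_cross)
qed

lemma map_x_map_cross: "map_x (map_cross \<tau>) x = 0"
  by (simp add: map_x_def map_cross_eq_row_cross row_cross_mult_position)

lemma pi_RT_map_x:
  assumes "open \<Omega>" "0 \<in> \<Omega>" "\<tau> \<in> P_tf \<Omega> m"
  shows "pi_RT (map_x \<tau>) x = 0"
proof -
  obtain T where T: "poly_mat_deg m T" "\<And>x. x \<in> \<Omega> \<Longrightarrow> \<tau> x = T x"
    using assms(3) by (auto simp: P_tf_def P_mat_iff)
  have "div_at (map_x \<tau>) 0 = trace (T 0)"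
    using T by (intro div_at_matrix_mult_position[OF assms(1,2), where c = 0])
      (auto simp: map_x_def intro: poly_deg_differentiable poly_mat_deg_entry)
  also have "\<dots> = 0"
    using assms(2,3) T(2) by (auto simp: P_tf_def)
  finally show ?thesis
    by (simp add: pi_RT_def map_x_def)
qed

section \<open>Exactness\<close>

lemma P_scal_eq_0_if_map_xxT_eq_0:
  assumes "open \<Omega>" "0 \<in> \<Omega>" "q \<in> P_scal \<Omega> m" "\<And>x. x \<in> \<Omega> \<Longrightarrow> map_xxT q x = 0" "x \<in> \<Omega>"
  shows "q x = 0"
proof -
  obtain p where p: "poly_deg m p" "\<And>x. x \<in> \<Omega> \<Longrightarrow> q x = p x"
    using assms(3) by (auto simp: P_scal_iff)
  have p1: "poly_deg (m + 1) (\<lambda>x. x$1 * p x)"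
    using p(1) by (rule poly_deg_coord_mult_left)
  have "x$1 * (x$1 * p x) = 0" for x
  proof (rule poly_deg_zero_on_open[OF poly_deg_coord_mult_left[OF p1] assms(1,2)])
    fix y assume "y \<in> \<Omega>"
    then show "y$1 * (y$1 * p y) = 0"
      using arg_cong[OF assms(4)[of y], of "\<lambda>M. M $ 1 $ 1"] p(2)[of y]
      by (simp add: map_xxT_def mult.commute mult.left_commute)
  qed
  then have "x$1 * p x = 0" for x
    using poly_deg_cancel_coord[OF p1 poly_deg_zero, of 1] by simp
  then have "p x = 0" for x
    using poly_deg_cancel_coord[OF p(1) poly_deg_zero, of 1] by simp
  then show ?thesis
    using p(2)[OF assms(5)] by simp
qed

lemma exact_at_P_sym:
  assumes "open \<Omega>" "0 \<in> \<Omega>" "\<tau> \<in> P_sym \<Omega> m" "\<And>x. x \<in> \<Omega> \<Longrightarrow> map_cross \<tau> x = 0"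
  shows "\<exists>q\<in>P_scal \<Omega> (m - 2). \<forall>x\<in>\<Omega>. \<tau> x = map_xxT q x"
proof -
  obtain T where T: "poly_mat_deg m T" "\<And>x. x \<in> \<Omega> \<Longrightarrow> \<tau> x = T x"
    using assms(3) by (auto simp: P_sym_def P_mat_iff)
  have T_rows: "poly_vec_deg m (\<lambda>x. T x $ i)" for i
    using T(1) by (simp add: poly_mat_deg_def)
  have sym: "skew_vector (T x) = 0" for x
    by (rule poly_vec_deg_zero_on_open[OF poly_vec_deg_skew_vector[OF T(1)] assms(1,2)])
       (use assms(3) T(2) in \<open>auto simp: P_sym_def skew_vector_eq_0_iff\<close>)
  have "cross3 (T x $ i) x = 0" for i x
    by (rule poly_vec_deg_zero_on_open[OF poly_vec_deg_cross_position[OF T_rows] assms(1,2)])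
       (use assms(4) T(2) in \<open>auto simp: map_cross_def vec_eq_iff\<close>)
  then have "\<forall>i. \<exists>a. poly_deg (m - 1) a \<and> (\<forall>x. T x $ i = a x *\<^sub>R x)"
    using poly_vec_deg_parallel[OF T_rows] by metis
  then obtain a where a: "\<And>i. poly_deg (m - 1) (a i)" "\<And>i x. T x $ i = a i x *\<^sub>R x"
    by metis
  have T_outer: "T x = (\<chi> i j. (\<chi> i. a i x) $ i * x$j)" for x
    by (simp add: vec_eq_iff a(2))
  have "cross3 (\<chi> i. a i x) x = 0" for x
    using sym[of x] unfolding T_outer skew_vector_outer .
  moreover have "poly_vec_deg (m - 1) (\<lambda>x. \<chi> i. a i x)"
    using a(1) by (simp add: poly_vec_deg_def)
  ultimately obtain q where q: "poly_deg (m - 1 - 1) q" "\<And>x. (\<chi> i. a i x) = q x *\<^sub>R x"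
    using poly_vec_deg_parallel by metis
  have "a i x = q x * x$i" for i x
    using arg_cong[OF q(2)[of x], of "\<lambda>v. v $ i"] by simp
  then have "\<tau> x = map_xxT q x" if "x \<in> \<Omega>" for x
    using T(2)[OF that] by (simp add: T_outer map_xxT_def vec_eq_iff mult.assoc)
  moreover have "q \<in> P_scal \<Omega> (m - 2)"
    using q(1) by (auto simp: P_scal_iff)
  ultimately show ?thesis
    by blast
qed

lemma exact_at_P_tf:
  assumes "open \<Omega>" "0 \<in> \<Omega>" "\<tau> \<in> P_tf \<Omega> (m + 1)" "\<And>x. x \<in> \<Omega> \<Longrightarrow> map_x \<tau> x = 0"
  shows "\<exists>\<sigma>\<in>P_sym \<Omega> m. \<forall>x\<in>\<Omega>. \<tau> x = map_cross \<sigma> x"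
proof -
  obtain T where T: "poly_mat_deg (m + 1) T" "\<And>x. x \<in> \<Omega> \<Longrightarrow> \<tau> x = T x"
    using assms(3) by (auto simp: P_tf_def P_mat_iff)
  have T_rows: "poly_vec_deg (m + 1) (\<lambda>x. T x $ i)" for i
    using T(1) by (simp add: poly_mat_deg_def)
  have trace: "trace (T x) = 0" for x
    by (rule poly_deg_zero_on_open[OF poly_deg_trace[OF T(1)] assms(1,2)])
       (use assms(3) T(2) in \<open>auto simp: P_tf_def\<close>)
  have "T x $ i \<bullet> x = 0" for i x
    by (rule poly_deg_zero_on_open[OF poly_deg_inner_position[OF T_rows] assms(1,2)])
       (use assms(4) T(2) in \<open>auto simp: map_x_def vec_eq_iff matrix_vector_mult_nth_inner\<close>)
  then have "\<forall>i. \<exists>w. poly_vec_deg m w \<and> (\<forall>x. T x $ i = cross3 (w x) x)"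
    using poly_vec_deg_koszul[OF T_rows] by (metis add_diff_cancel_right')
  then obtain w where w: "\<And>i. poly_vec_deg m (w i)" "\<And>i x. T x $ i = cross3 (w i x) x"
    by metis
  define W where "W x = (\<chi> i. w i x)" for x
  have W: "poly_mat_deg m W"
    using w(1) by (simp add: W_def poly_mat_deg_def)
  have T_W: "T x = row_cross (W x) x" for x
    by (simp add: W_def row_cross_def vec_eq_iff w(2))
  have "skew_vector (W x) \<bullet> x = 0" for x
    using trace[of x] by (simp add: T_W trace_row_cross)
  then obtain g where g: "poly_vec_deg (m - 1) g" "\<And>x. skew_vector (W x) = cross3 (g x) x"
    using poly_vec_deg_koszul[OF poly_vec_deg_skew_vector[OF W]] by metis
  define \<sigma> where "\<sigma> x = W x - (\<chi> i j. g x $ i * x$j)" for x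
  have "poly_mat_deg m (\<lambda>x. \<chi> i j. g x $ i * x$j)"
    using poly_mat_deg_outer_position[OF g(1)] by simp
  then have "poly_mat_deg m \<sigma>"
    unfolding \<sigma>_def by (rule poly_mat_deg_diff[OF W])
  moreover have "transpose (\<sigma> x) = \<sigma> x" for x
    by (simp add: \<sigma>_def skew_vector_diff skew_vector_outer g(2) flip: skew_vector_eq_0_iff)
  ultimately have "\<sigma> \<in> P_sym \<Omega> m"
    by (auto simp: P_sym_def P_mat_iff)
  moreover have "\<tau> x = map_cross \<sigma> x" if "x \<in> \<Omega>" for x
    by (simp add: T(2)[OF that] T_W map_cross_eq_row_cross \<sigma>_def row_cross_diff
        row_cross_outer_position)
  ultimately show ?thesis
    by blast
qed

lemma pi_RT_eq_0_imp_value_div_eq_0: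
  assumes "open \<Omega>" "0 \<in> \<Omega>" "\<And>x. x \<in> \<Omega> \<Longrightarrow> pi_RT v x = 0"
  shows "v 0 = 0" "div_at v 0 = 0"
proof -
  show v0: "v 0 = 0"
    using assms(2) assms(3)[of 0] by (simp add: pi_RT_def)
  obtain e where "e > 0" "ball 0 e \<subseteq> \<Omega>"
    using assms(1,2) open_contains_ball by blast
  then have "(e/2) *\<^sub>R (axis 1 1 :: real^3) \<in> \<Omega>"
    by (auto simp: subset_iff)
  then have "pi_RT v ((e/2) *\<^sub>R (axis 1 1 :: real^3)) = 0"
    by (rule assms(3))
  then have "((1/3) * div_at v 0) *\<^sub>R ((e/2) *\<^sub>R (axis 1 1 :: real^3)) = 0"
    using v0 by (simp add: pi_RT_def)
  from arg_cong[OF this, of "\<lambda>y. y $ 1"] show "div_at v 0 = 0"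
    using \<open>e > 0\<close> by simp
qed

lemma exact_at_P_vec:
  assumes "open \<Omega>" "0 \<in> \<Omega>" "v \<in> P_vec \<Omega> (m + 1)" "\<And>x. x \<in> \<Omega> \<Longrightarrow> pi_RT v x = 0"
  shows "\<exists>\<tau>\<in>P_tf \<Omega> m. \<forall>x\<in>\<Omega>. v x = map_x \<tau> x"
proof -
  obtain V where V: "poly_vec_deg (m + 1) V" "\<And>x. x \<in> \<Omega> \<Longrightarrow> v x = V x"
    using assms(3) by (auto simp: P_vec_iff)
  have "\<exists>a. poly_vec_deg m a \<and> (\<forall>x. V x $ i = V 0 $ i + a x \<bullet> x)" for i
  proof -
    obtain a where "poly_vec_deg (m + 1 - 1) a" "\<And>x. V x $ i = V 0 $ i + a x \<bullet> x"
      using poly_deg_expand_at_0[of "m + 1" "\<lambda>x. V x $ i"] V(1) unfolding poly_vec_deg_def by blast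
    then show ?thesis
      unfolding add_diff_cancel_right' by blast
  qed
  then obtain a where a: "\<And>i. poly_vec_deg m (a i)" "\<And>i x. V x $ i = V 0 $ i + a i x \<bullet> x"
    by metis
  define A where "A x = (\<chi> i. a i x)" for x
  have A: "poly_mat_deg m A"
    using a(1) by (simp add: A_def poly_mat_deg_def)
  have "V 0 = 0"
    using pi_RT_eq_0_imp_value_div_eq_0(1)[OF assms(1,2,4)] V(2)[OF assms(2)] by simp
  then have v_A: "v x = A x *v x" if "x \<in> \<Omega>" for x
    using V(2)[OF that] a(2)[where x = x] by (simp add: A_def vec_eq_iff matrix_vector_mult_nth_inner)
  have "trace (A 0) = div_at v 0"
    using v_A A by (intro div_at_matrix_mult_position[OF assms(1,2), where c = 0, symmetric])
      (auto intro: poly_deg_differentiable poly_mat_deg_entry)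
  also have "\<dots> = 0"
    using pi_RT_eq_0_imp_value_div_eq_0(2)[OF assms(1,2,4)] .
  finally have trace_A0: "trace (A 0) = 0" .
  obtain b where b: "poly_vec_deg (m - 1) b" "\<And>x. trace (A x) = trace (A 0) + b x \<bullet> x"
    using poly_deg_expand_at_0[OF poly_deg_trace[OF A]] by blast
  \<comment> \<open>\<open>row_cross (E (b x)) x\<close> is annihilated by \<open>x\<close> and has trace \<open>b x \<bullet> x\<close>, the trace of \<open>A x\<close>\<close>
  define E :: "real^3 \<Rightarrow> real^3^3" where
    "E z = vector [vector [0, z$3, 0], vector [0, 0, z$1], vector [z$2, 0, 0]]" for z
  have skew_E: "skew_vector (E z) = z" for z
    by (simp add: E_def skew_vector_def vec_eq_iff forall_3)
  have "poly_mat_deg (m - 1) (\<lambda>x. E (b x))"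
    using b(1) by (simp add: E_def poly_mat_deg_def poly_vec_deg_def forall_3 poly_deg_zero)
  then have "poly_mat_deg m (\<lambda>x. row_cross (E (b x)) x)"
    using poly_mat_deg_row_cross by fastforce
  then have "poly_mat_deg m (\<lambda>x. A x - row_cross (E (b x)) x)"
    by (rule poly_mat_deg_diff[OF A])
  moreover have "trace (A x - row_cross (E (b x)) x) = 0" for x
    using b(2)[of x] trace_A0 by (simp add: trace_sub trace_row_cross skew_E)
  ultimately have "(\<lambda>x. A x - row_cross (E (b x)) x) \<in> P_tf \<Omega> m"
    by (auto simp: P_tf_def P_mat_iff)
  moreover have "v x = map_x (\<lambda>x. A x - row_cross (E (b x)) x) x" if "x \<in> \<Omega>" for x
    using v_A[OF that] by (simp add: map_x_def matrix_vector_mult_diff_rdistrib row_cross_mult_position)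
  ultimately show ?thesis
    by blast
qed

lemma pi_RT_surj:
  assumes "1 \<le> m" "f \<in> RT"
  shows "\<exists>v\<in>P_vec \<Omega> m. \<forall>x\<in>\<Omega>. pi_RT v x = f x"
proof -
  obtain a b where f: "f = (\<lambda>x. a *\<^sub>R x + b)"
    using assms(2) unfolding RT_def by blast
  have "poly_deg m (\<lambda>x. a * x$i + b$i)" for i
    using assms(1) by (intro poly_deg_add poly_deg_scale poly_deg_coord poly_deg_const) auto
  then have "f \<in> P_vec \<Omega> m"
    unfolding P_vec_iff by (intro exI[of _ f]) (simp add: poly_vec_deg_def f)
  moreover have "div_at f 0 = trace (a *\<^sub>R mat 1 :: real^3^3)"
    by (rule div_at_matrix_mult_position[where \<Omega> = UNIV and c = b])
       (simp_all add: f flip: scaleR_matrix_vector_assoc)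
  then have "pi_RT f = f"
    by (simp add: pi_RT_def f trace_def sum_3 mat_def fun_eq_iff add.commute)
  ultimately show ?thesis
    by (intro bexI[of _ f]) auto
qed

theorem lemma3p3:
  fixes \<Omega> :: "(real^3) set" and k :: nat
  assumes "open \<Omega>" and "connected \<Omega>" and "bounded \<Omega>" and "0 \<in> \<Omega>"
  shows
    \<comment> \<open>well-definedness\<close>
    "(\<forall>q\<in>P_scal \<Omega> (int k - 2). map_xxT q \<in> P_sym \<Omega> (int k))
   \<and> (\<forall>\<tau>\<in>P_sym \<Omega> (int k). map_cross \<tau> \<in> P_tf \<Omega> (int k + 1))
   \<and> (\<forall>\<tau>\<in>P_tf \<Omega> (int k + 1). map_x \<tau> \<in> P_vec \<Omega> (int k + 2))
   \<and> (\<forall>v\<in>P_vec \<Omega> (int k + 2). pi_RT v \<in> RT)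
    \<comment> \<open>complex: composition of consecutive maps vanishes\<close>
   \<and> (\<forall>q\<in>P_scal \<Omega> (int k - 2). \<forall>x\<in>\<Omega>. map_cross (map_xxT q) x = 0)
   \<and> (\<forall>\<tau>\<in>P_sym \<Omega> (int k). \<forall>x\<in>\<Omega>. map_x (map_cross \<tau>) x = 0)
   \<and> (\<forall>\<tau>\<in>P_tf \<Omega> (int k + 1). \<forall>x\<in>\<Omega>. pi_RT (map_x \<tau>) x = 0)
    \<comment> \<open>exactness\<close>
   \<and> (\<forall>q\<in>P_scal \<Omega> (int k - 2). (\<forall>x\<in>\<Omega>. map_xxT q x = 0) \<longrightarrow> (\<forall>x\<in>\<Omega>. q x = 0))
   \<and> (\<forall>\<tau>\<in>P_sym \<Omega> (int k). (\<forall>x\<in>\<Omega>. map_cross \<tau> x = 0) \<longrightarrow>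
        (\<exists>q\<in>P_scal \<Omega> (int k - 2). \<forall>x\<in>\<Omega>. \<tau> x = map_xxT q x))
   \<and> (\<forall>\<tau>\<in>P_tf \<Omega> (int k + 1). (\<forall>x\<in>\<Omega>. map_x \<tau> x = 0) \<longrightarrow>
        (\<exists>\<sigma>\<in>P_sym \<Omega> (int k). \<forall>x\<in>\<Omega>. \<tau> x = map_cross \<sigma> x))
   \<and> (\<forall>v\<in>P_vec \<Omega> (int k + 2). (\<forall>x\<in>\<Omega>. pi_RT v x = 0) \<longrightarrow>
        (\<exists>\<tau>\<in>P_tf \<Omega> (int k + 1). \<forall>x\<in>\<Omega>. v x = map_x \<tau> x))
   \<and> (\<forall>f\<in>RT. \<exists>v\<in>P_vec \<Omega> (int k + 2). \<forall>x\<in>\<Omega>. pi_RT v x = f x)"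
proof -
  have k2: "int k + 2 = int k + 1 + 1"
    by simp
  have "map_x \<tau> \<in> P_vec \<Omega> (int k + 2)" if "\<tau> \<in> P_tf \<Omega> (int k + 1)" for \<tau>
    unfolding k2 using that by (intro map_x_in_P_vec) (simp add: P_tf_def)
  moreover have "\<exists>\<tau>\<in>P_tf \<Omega> (int k + 1). \<forall>x\<in>\<Omega>. v x = map_x \<tau> x"
    if "v \<in> P_vec \<Omega> (int k + 2)" "\<And>x. x \<in> \<Omega> \<Longrightarrow> pi_RT v x = 0" for v
    using that unfolding k2 by (intro exact_at_P_vec[OF assms(1,4)])
  ultimately show ?thesis
    using map_xxT_in_P_sym map_cross_in_P_tf pi_RT_in_RT map_cross_map_xxT map_x_map_cross
      pi_RT_map_x[OF assms(1,4)] P_scal_eq_0_if_map_xxT_eq_0[OF assms(1,4)]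
      exact_at_P_sym[OF assms(1,4)] exact_at_P_tf[OF assms(1,4)] pi_RT_surj[of "int k + 2"]
    by simp
qed

end
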